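(* Let $d\ge1$, $T\in(-\infty,\infty]$, $\alpha\in(0,1]$, and let $u\in L_{2,\mathrm{loc}}(\mathbb{R}^{1+2d}_T)$ satisfy $[u]_{\mathcal{L}^{2,\alpha}_{\mathrm{kin}}(\mathbb{R}^{1+2d}_T)}<\infty$. Then $$N[u]_{C^\alpha_{\mathrm{kin}}(\mathbb{R}^{1+2d}_T)}\le[u]_{\mathcal{L}^{2,\alpha}_{\mathrm{kin}}(\mathbb{R}^{1+2d}_T)}\le N^{-1}[u]_{C^\alpha_{\mathrm{kin}}(\mathbb{R}^{1+2d}_T)},$$ where $N=N(d,\alpha)>0$.
   Context: Notation: $z=(t,x,v)$, $\mathbb{R}^{1+2d}_T=(-\infty,T)\times\mathbb{R}^{2d}$. $\rho(z,z_0)=\max\{|t-t_0|^{1/2},|x-x_0+(t-t_0)v_0|^{1/3},|v-v_0|\}$ and $[u]_{C^\alpha_{\mathrm{kin}}(\mathbb{R}^{1+2d}_T)}=\sup_{z\ne z'}|u(z)-u(z')|/\rho^\alpha(z,z')$ over $z,z'\in\mathbb{R}^{1+2d}_T$. $Q_r(z_0)=\{z:-r^2<t-t_0<0,\ |v-v_0|<r,\ |x-x_0+(t-t_0)v_0|^{1/3}<r\}$. $(f)_A=|A|^{-1}\int_Af$. Kinetic Campanato seminorm: $[u]_{\mathcal{L}^{2,\alpha}_{\mathrm{kin}}(\mathbb{R}^{1+2d}_T)}=\sup_{r>0,\,z_0\in\overline{\mathbb{R}^{1+2d}_T}}r^{-\alpha}\big(\fint_{Q_r(z_0)}|u-(u)_{Q_r(z_0)}|^2\big)^{1/2}$.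 *)

theory Defs
  imports "HOL-Analysis.Analysis"
begin

type_synonym 'd kpoint = "real \<times> (real^'d) \<times> (real^'d)"

definition kdom :: "ereal \<Rightarrow> 'd::finite kpoint set" where
  "kdom T = {z. ereal (fst z) < T}"

definition krho :: "'d::finite kpoint \<Rightarrow> 'd kpoint \<Rightarrow> real" where
  "krho z z0 = (case z of (t, x, v) \<Rightarrow> case z0 of (t0, x0, v0) \<Rightarrow>
     max (sqrt \<bar>t - t0\<bar>) (max (root 3 (norm (x - x0 + (t - t0) *\<^sub>R v0))) (norm (v - v0))))"

definition kcyl :: "real \<Rightarrow> 'd::finite kpoint \<Rightarrow> 'd kpoint set" where
  "kcyl r z0 = (case z0 of (t0, x0, v0) \<Rightarrow>
     {(t, x, v). - (r^2) < t - t0 \<and> t - t0 < 0 \<and> norm (v - v0) < r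
        \<and> root 3 (norm (x - x0 + (t - t0) *\<^sub>R v0)) < r})"

definition avg :: "'a::euclidean_space set \<Rightarrow> ('a \<Rightarrow> real) \<Rightarrow> real" where
  "avg A f = (LINT z:A|lebesgue. f z) / measure lebesgue A"

definition kholder :: "real \<Rightarrow> ereal \<Rightarrow> ('d::finite kpoint \<Rightarrow> real) \<Rightarrow> ennreal" where
  "kholder \<alpha> T u = (SUP p \<in> {(z, z'). z \<in> kdom T \<and> z' \<in> kdom T \<and> z \<noteq> z'}.
       ennreal (\<bar>u (fst p) - u (snd p)\<bar> / (krho (fst p) (snd p)) powr \<alpha>))"

definition kcampanato :: "real \<Rightarrow> ereal \<Rightarrow> ('d::finite kpoint \<Rightarrow> real) \<Rightarrow> ennreal" where
  "kcampanato \<alpha> T u = (SUP p \<in> {(r, z0). r > 0 \<and> z0 \<in> closure (kdom T)}.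
       ennreal (fst p powr (- \<alpha>) *
         sqrt (avg (kcyl (fst p) (snd p)) (\<lambda>z. (u z - avg (kcyl (fst p) (snd p)) u)^2))))"

definition L2loc :: "ereal \<Rightarrow> ('d::finite kpoint \<Rightarrow> real) \<Rightarrow> bool" where
  "L2loc T u \<longleftrightarrow> set_borel_measurable lebesgue (kdom T) u \<and>
     (\<forall>B. bounded B \<longrightarrow> set_integrable lebesgue (B \<inter> kdom T) (\<lambda>z. (u z)^2))"

end

theory Submission
  imports Defs
begin

text \<open>
  Let \<open>u\<^sub>r(z)\<close> be the mean of \<open>u\<close> over \<open>Q\<^sub>r(z)\<close>. If
  \<open>Q\<^sub>\<rho>(a) \<subseteq> Q\<^sub>r(b)\<close> and \<open>r \<le> 2\<rho>\<close>, then \<open>|u\<^sub>\<rho>(a) - u\<^sub>r(b)|\<^sup>2\<close> is at most the mean of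
  \<open>|u - u\<^sub>r(b)|\<^sup>2\<close> over \<open>Q\<^sub>\<rho>(a)\<close>, hence at most \<open>|Q\<^sub>r| / |Q\<^sub>\<rho>| \<le> 2\<^sup>4\<^sup>d\<^sup>+\<^sup>2\<close> times the
  Campanato bound \<open>(k r\<^sup>\<alpha>)\<^sup>2\<close>. Along dyadic scales these errors form a geometric series, so
  \<open>u\<^sub>r(z)\<close> converges to some \<open>w(z)\<close> with \<open>|u\<^sub>r(z) - w(z)| \<le> C k r\<^sup>\<alpha>\<close>. If \<open>t\<^sub>a \<le> t\<^sub>b\<close> and
  \<open>\<rho>(a, b) \<le> D\<close>, then \<open>Q\<^sub>D(a) \<subseteq> Q\<^sub>2\<^sub>D(b)\<close>, which gives \<open>|w(a) - w(b)| \<le> C k \<rho>(a, b)\<^sup>\<alpha>\<close>; the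
  quasi-symmetry \<open>\<rho>(b, a) \<le> 2 \<rho>(a, b)\<close> removes the condition on the times. Finally \<open>w = u\<close>
  almost everywhere: the mean of \<open>|u - w|\<^sup>2\<close> over \<open>Q\<^sub>r(z\<^sub>0)\<close> is \<open>O(r\<^sup>2\<^sup>\<alpha>)\<close>, and integrating
  over the centres \<open>z\<^sub>0\<close> (Fubini) shows that the integral of \<open>|u - w|\<^sup>2\<close> over any fixed
  cylinder is \<open>O(r\<^sup>2\<^sup>\<alpha>)\<close> for all small \<open>r\<close>, hence zero.

  Hoelder implies Campanato directly, since \<open>Q\<^sub>r(z\<^sub>0)\<close> has \<open>\<rho>\<close>-diameter at most \<open>3r\<close>.
\<close>

section \<open>The kinetic quasi-distance and kinetic cylinders\<close>

lemma root3_le_iff: "root 3 y \<le> r \<longleftrightarrow> y \<le> r ^ 3"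
  by (metis odd_real_root_power_cancel odd_numeral real_root_le_iff zero_less_numeral)

lemma root3_less_iff: "root 3 y < r \<longleftrightarrow> y < r ^ 3"
  by (metis odd_real_root_power_cancel odd_numeral real_root_less_iff zero_less_numeral)

lemma sqrt_le_iff_le_power2: "0 \<le> r \<Longrightarrow> sqrt y \<le> r \<longleftrightarrow> y \<le> r ^ 2"
  by (metis real_sqrt_le_iff real_sqrt_pow2 zero_le_power2 real_sqrt_power real_sqrt_unique)

lemma sqrt_less_iff_less_power2: "0 \<le> r \<Longrightarrow> sqrt y < r \<longleftrightarrow> y < r ^ 2"
  by (metis real_sqrt_less_iff real_sqrt_unique zero_le_power2)

lemma krho_le_iff:
  "0 \<le> r \<Longrightarrow> krho (t, x, v) (t0, x0, v0) \<le> r \<longleftrightarrow>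
     \<bar>t - t0\<bar> \<le> r ^ 2 \<and> norm (x - x0 + (t - t0) *\<^sub>R v0) \<le> r ^ 3 \<and> norm (v - v0) \<le> r"
  by (simp add: krho_def sqrt_le_iff_le_power2 root3_le_iff)

lemma krho_less_iff:
  "0 \<le> r \<Longrightarrow> krho (t, x, v) (t0, x0, v0) < r \<longleftrightarrow>
     \<bar>t - t0\<bar> < r ^ 2 \<and> norm (x - x0 + (t - t0) *\<^sub>R v0) < r ^ 3 \<and> norm (v - v0) < r"
  by (simp add: krho_def sqrt_less_iff_less_power2 root3_less_iff)

lemma krho_nonneg: "0 \<le> krho z z0"
  by (simp add: krho_def max.coboundedI2 split: prod.split)

lemma krho_self [simp]: "krho z z = 0"
  by (simp add: krho_def split: prod.split)

lemma krho_components_le: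
  assumes "krho (t, x, v) (t0, x0, v0) = r"
  shows "\<bar>t - t0\<bar> \<le> r ^ 2 \<and> norm (x - x0 + (t - t0) *\<^sub>R v0) \<le> r ^ 3 \<and> norm (v - v0) \<le> r"
proof -
  have "0 \<le> r"
    using assms krho_nonneg by metis
  then show ?thesis
    using krho_le_iff[of r t x v t0 x0 v0] assms by auto
qed

lemma krho_eq_0_iff: "krho z z0 = 0 \<longleftrightarrow> z = z0"
proof
  assume "krho z z0 = 0"
  then show "z = z0"
    using krho_components_le[of "fst z" "fst (snd z)" "snd (snd z)" "fst z0" "fst (snd z0)" "snd (snd z0)" 0]
    by (auto simp: prod_eq_iff)
qed simp

lemma krho_pos: "z \<noteq> z0 \<Longrightarrow> 0 < krho z z0"
  using krho_nonneg[of z z0] krho_eq_0_iff[of z z0] by linarith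

lemma krho_triangle: "krho a c \<le> krho a b + krho b c"
proof -
  obtain t1 x1 v1 t2 x2 v2 t3 x3 v3 where abc: "a = (t1, x1, v1)" "b = (t2, x2, v2)" "c = (t3, x3, v3)"
    by (metis prod.exhaust)
  define p q where "p = krho a b" and "q = krho b c"
  have pq: "0 \<le> p" "0 \<le> q" unfolding p_def q_def by (rule krho_nonneg)+
  have P: "\<bar>t1 - t2\<bar> \<le> p ^ 2" "norm (x1 - x2 + (t1 - t2) *\<^sub>R v2) \<le> p ^ 3" "norm (v1 - v2) \<le> p"
    using krho_components_le[of t1 x1 v1 t2 x2 v2 p] p_def abc by auto
  have Q: "\<bar>t2 - t3\<bar> \<le> q ^ 2" "norm (x2 - x3 + (t2 - t3) *\<^sub>R v3) \<le> q ^ 3" "norm (v2 - v3) \<le> q"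
    using krho_components_le[of t2 x2 v2 t3 x3 v3 q] q_def abc by auto
  have "\<bar>t1 - t3\<bar> \<le> p ^ 2 + q ^ 2"
    using P(1) Q(1) by linarith
  also have "\<dots> \<le> (p + q) ^ 2"
    using pq by (simp add: power2_sum)
  finally have t: "\<bar>t1 - t3\<bar> \<le> (p + q) ^ 2" .
  \<comment> \<open>the change of frame from \<open>v2\<close> to \<open>v3\<close> costs \<open>|t1 - t2| |v2 - v3| \<le> p\<^sup>2 q\<close>\<close>
  have "x1 - x3 + (t1 - t3) *\<^sub>R v3 =
      (x1 - x2 + (t1 - t2) *\<^sub>R v2) + (x2 - x3 + (t2 - t3) *\<^sub>R v3) - (t1 - t2) *\<^sub>R (v2 - v3)"
    by (simp add: algebra_simps)
  then have "norm (x1 - x3 + (t1 - t3) *\<^sub>R v3) \<le>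
      norm ((x1 - x2 + (t1 - t2) *\<^sub>R v2) + (x2 - x3 + (t2 - t3) *\<^sub>R v3)) + norm ((t1 - t2) *\<^sub>R (v2 - v3))"
    by (simp only: norm_triangle_ineq4)
  also have "\<dots> \<le>
      norm (x1 - x2 + (t1 - t2) *\<^sub>R v2) + norm (x2 - x3 + (t2 - t3) *\<^sub>R v3) + norm ((t1 - t2) *\<^sub>R (v2 - v3))"
    using norm_triangle_ineq by (rule add_right_mono)
  also have "\<dots> \<le> p ^ 3 + q ^ 3 + \<bar>t1 - t2\<bar> * norm (v2 - v3)"
    using P(2) Q(2) by simp
  also have "\<dots> \<le> p ^ 3 + q ^ 3 + p ^ 2 * q"
    using P(1) Q(3) by (simp add: mult_mono)
  also have "\<dots> \<le> (p + q) ^ 3"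
    using pq by (simp add: power3_eq_cube power2_eq_square algebra_simps)
  finally have x: "norm (x1 - x3 + (t1 - t3) *\<^sub>R v3) \<le> (p + q) ^ 3" .
  have v: "norm (v1 - v3) \<le> p + q"
    using norm_triangle_ineq[of "v1 - v2" "v2 - v3"] P(3) Q(3) by simp
  show ?thesis
    using t x v krho_le_iff[of "p + q" t1 x1 v1 t3 x3 v3] pq abc p_def q_def by simp
qed

lemma krho_commute_le: "krho b a \<le> 2 * krho a b"
proof -
  obtain t1 x1 v1 t2 x2 v2 where ab: "a = (t1, x1, v1)" "b = (t2, x2, v2)"
    by (metis prod.exhaust)
  define p where "p = krho a b"
  have p: "0 \<le> p" unfolding p_def by (rule krho_nonneg)
  have P: "\<bar>t1 - t2\<bar> \<le> p ^ 2" "norm (x1 - x2 + (t1 - t2) *\<^sub>R v2) \<le> p ^ 3" "norm (v1 - v2) \<le> p"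
    using krho_components_le[of t1 x1 v1 t2 x2 v2 p] p_def ab by auto
  have "x2 - x1 + (t2 - t1) *\<^sub>R v1 = - (x1 - x2 + (t1 - t2) *\<^sub>R v2) + (t1 - t2) *\<^sub>R (v2 - v1)"
    by (simp add: algebra_simps)
  then have "norm (x2 - x1 + (t2 - t1) *\<^sub>R v1) \<le>
      norm (x1 - x2 + (t1 - t2) *\<^sub>R v2) + norm ((t1 - t2) *\<^sub>R (v2 - v1))"
    by (metis norm_minus_cancel norm_triangle_ineq)
  also have "\<dots> \<le> p ^ 3 + \<bar>t1 - t2\<bar> * norm (v1 - v2)"
    using P(2) by (simp add: norm_minus_commute)
  also have "\<dots> \<le> p ^ 3 + p ^ 2 * p"
    using P(1,3) by (simp add: mult_mono)
  also have "\<dots> \<le> (2 * p) ^ 3"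
    using p by (simp add: power3_eq_cube power2_eq_square)
  finally have x: "norm (x2 - x1 + (t2 - t1) *\<^sub>R v1) \<le> (2 * p) ^ 3" .
  have "\<bar>t2 - t1\<bar> \<le> (2 * p) ^ 2" "norm (v2 - v1) \<le> 2 * p"
    using P(1,3) p by (simp_all add: power2_eq_square abs_minus_commute norm_minus_commute)
  then show ?thesis
    using x krho_le_iff[of "2 * p" t2 x2 v2 t1 x1 v1] p ab p_def by simp
qed

lemma continuous_on_krho [continuous_intros]:
  "continuous_on S f \<Longrightarrow> continuous_on S g \<Longrightarrow> continuous_on S (\<lambda>x. krho (f x) (g x))"
  unfolding krho_def by (simp add: case_prod_beta') (intro continuous_intros)

lemma continuous_on_krho_holder:
  fixes f :: "'d::finite kpoint \<Rightarrow> real"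
  assumes "0 < \<alpha>" and holder: "\<And>z z'. z \<in> S \<Longrightarrow> z' \<in> S \<Longrightarrow> \<bar>f z - f z'\<bar> \<le> C * krho z z' powr \<alpha>"
  shows "continuous_on S f"
  unfolding continuous_on_def
proof
  fix z assume z: "z \<in> S"
  have "continuous_on UNIV (\<lambda>z'. krho z' z)"
    by (intro continuous_intros)
  then have "((\<lambda>z'. krho z' z) \<longlongrightarrow> 0) (at z)"
    unfolding continuous_on_def by (metis UNIV_I krho_self)
  then have "((\<lambda>z'. krho z' z) \<longlongrightarrow> 0) (at z within S)"
    by (rule tendsto_within_subset) simp
  then have "((\<lambda>z'. krho z' z powr \<alpha>) \<longlongrightarrow> 0) (at z within S)"
    using assms(1) by (intro tendsto_zero_powrI always_eventually allI krho_nonneg) simp_all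
  then have lim: "((\<lambda>z'. C * krho z' z powr \<alpha>) \<longlongrightarrow> 0) (at z within S)"
    using tendsto_mult_right_zero by blast
  have bound: "\<forall>\<^sub>F z' in at z within S. norm (f z' - f z) \<le> C * krho z' z powr \<alpha>"
    unfolding eventually_at_filter by (intro always_eventually allI impI) (simp add: holder z)
  have "((\<lambda>z'. f z' - f z) \<longlongrightarrow> 0) (at z within S)"
    using bound lim by (rule Lim_null_comparison)
  then show "(f \<longlongrightarrow> f z) (at z within S)"
    by (simp add: LIM_zero_iff)
qed

lemma kcyl_eq: "0 < r \<Longrightarrow> kcyl r z0 = {z. fst z < fst z0 \<and> krho z z0 < r}"
  by (cases z0) (force simp: kcyl_def krho_less_iff root3_less_iff)

lemma kcyl_empty: "r \<le> 0 \<Longrightarrow> kcyl r z0 = {}"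
  by (cases z0) (auto simp: kcyl_def dest: order.strict_trans1[OF norm_ge_zero])

lemma kcyl_mono: "r \<le> R \<Longrightarrow> kcyl r z \<subseteq> kcyl R z"
  by (cases "0 < r") (auto simp: kcyl_eq kcyl_empty)

lemma kcyl_subset_kcyl_add:
  assumes "fst a \<le> fst b" and "0 < \<rho>"
  shows "kcyl \<rho> a \<subseteq> kcyl (\<rho> + krho a b) b"
proof
  fix z assume "z \<in> kcyl \<rho> a"
  then show "z \<in> kcyl (\<rho> + krho a b) b"
    using assms krho_triangle[of z b a] krho_nonneg[of a b] by (simp add: kcyl_eq add_pos_nonneg)
qed

lemma open_kcyl: "open (kcyl r z0)"
proof (cases "0 < r")
  case True
  then show ?thesis
    unfolding kcyl_eq[OF True] by (intro open_Collect_conj open_Collect_less continuous_intros)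
qed (simp add: kcyl_empty)

lemma kcyl_sets [measurable]: "kcyl r z0 \<in> sets lborel"
  by (simp add: open_kcyl)

lemma kcyl_sets_lebesgue: "kcyl r z0 \<in> sets lebesgue"
  by (simp add: open_kcyl)

lemma bounded_kcyl: "bounded (kcyl r (z0::'d::finite kpoint))"
proof -
  obtain t0 x0 v0 where z0: "z0 = (t0, x0, v0)"
    using prod_cases3 by blast
  have "kcyl r z0 \<subseteq> cball t0 (r\<^sup>2) \<times> cball x0 (r ^ 3 + r\<^sup>2 * norm v0) \<times> cball v0 r"
  proof
    fix z assume z: "z \<in> kcyl r z0"
    obtain t x v where zs: "z = (t, x, v)"
      using prod_cases3 by blast
    have "\<bar>t - t0\<bar> \<le> r\<^sup>2" "norm (x - x0 + (t - t0) *\<^sub>R v0) \<le> r ^ 3" "norm (v - v0) \<le> r"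
      using z by (auto simp: zs z0 kcyl_def root3_less_iff)
    moreover have "norm (x - x0) \<le> norm (x - x0 + (t - t0) *\<^sub>R v0) + \<bar>t - t0\<bar> * norm v0"
      using norm_triangle_ineq4[of "x - x0 + (t - t0) *\<^sub>R v0" "(t - t0) *\<^sub>R v0"] by simp
    moreover have "\<bar>t - t0\<bar> * norm v0 \<le> r\<^sup>2 * norm v0"
      using calculation(1) by (simp add: mult_right_mono)
    ultimately show "z \<in> cball t0 (r\<^sup>2) \<times> cball x0 (r ^ 3 + r\<^sup>2 * norm v0) \<times> cball v0 r"
      by (auto simp: zs dist_norm norm_minus_commute abs_minus_commute)
  qed
  then show ?thesis
    by (rule bounded_subset[rotated]) (intro bounded_Times bounded_cball)
qed

lemma closure_kdom_subset: "closure (kdom T) \<subseteq> {z. ereal (fst z) \<le> T}"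
proof (rule closure_minimal)
  show "closed {z::'d::finite kpoint. ereal (fst z) \<le> T}"
    by (cases T) (auto simp: closed_Collect_le continuous_on_fst)
qed (auto simp: kdom_def)

lemma kcyl_subset_kdom:
  assumes "z0 \<in> closure (kdom T)"
  shows "kcyl r z0 \<subseteq> kdom T"
proof
  fix z assume "z \<in> kcyl r z0"
  then have "ereal (fst z) < ereal (fst z0)"
    by (cases z0) (auto simp: kcyl_def)
  also have "\<dots> \<le> T"
    using assms closure_kdom_subset by blast
  finally show "z \<in> kdom T"
    by (simp add: kdom_def)
qed

lemma open_kdom: "open (kdom T)"
  by (cases T) (auto simp: kdom_def open_Collect_less continuous_on_fst)

lemma kcyl_time_slice:
  fixes x0 v0 :: "real^'d::finite"
  assumes "0 < r"
  shows "Pair t -` kcyl r (t0, x0, v0) =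
    (if t0 - r\<^sup>2 < t \<and> t < t0 then ball (x0 - (t - t0) *\<^sub>R v0) (r ^ 3) \<times> ball v0 r else {})"
proof -
  have "dist (x0 - (t - t0) *\<^sub>R v0) x = norm (x - x0 + (t - t0) *\<^sub>R v0)" for x :: "real^'d"
    by (simp add: dist_norm norm_minus_commute algebra_simps)
  then show ?thesis
    using assms by (auto simp: kcyl_def root3_less_iff dist_commute[of v0] dist_norm norm_minus_commute)
qed

lemma emeasure_kcyl:
  assumes r: "0 < r"
  shows "emeasure lborel (kcyl r z0 :: 'd::finite kpoint set) =
    ennreal (unit_ball_vol CARD('d) ^ 2 * r ^ (4 * CARD('d) + 2))"
proof -
  obtain t0 x0 v0 where z0: "z0 = (t0, x0, v0)"
    using prod_cases3 by blast
  let ?n = "CARD('d)"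
  have balls: "emeasure lborel (ball c (r ^ 3) \<times> ball v0 r) =
      ennreal (unit_ball_vol ?n * (r ^ 3) ^ ?n) * ennreal (unit_ball_vol ?n * r ^ ?n)" for c :: "real^'d"
    using r by (simp add: lborel_prod[symmetric] lborel.emeasure_pair_measure_Times emeasure_ball)
  have "emeasure lborel (kcyl r z0) = emeasure (lborel \<Otimes>\<^sub>M lborel) (kcyl r z0)"
    by (simp add: lborel_prod)
  also have "\<dots> = (\<integral>\<^sup>+t. emeasure lborel (Pair t -` kcyl r z0) \<partial>lborel)"
    by (rule lborel.emeasure_pair_measure_alt) (unfold lborel_prod, rule kcyl_sets)
  also have "\<dots> = (\<integral>\<^sup>+t. ennreal (unit_ball_vol ?n * (r ^ 3) ^ ?n) * ennreal (unit_ball_vol ?n * r ^ ?n)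
      * indicator {t0 - r\<^sup>2 <..< t0} t \<partial>lborel)"
    by (intro nn_integral_cong) (simp add: z0 kcyl_time_slice[OF r] balls split: split_indicator)
  also have "\<dots> = ennreal (unit_ball_vol ?n * (r ^ 3) ^ ?n) * ennreal (unit_ball_vol ?n * r ^ ?n) * ennreal (r\<^sup>2)"
    by (subst nn_integral_cmult_indicator) auto
  also have "\<dots> = ennreal (unit_ball_vol ?n ^ 2 * r ^ (4 * ?n + 2))"
    using r by (simp add: ennreal_mult'[symmetric] power2_eq_square power_mult[symmetric]
        power_add[symmetric] mult_ac)
  finally show ?thesis .
qed

lemma measure_kcyl:
  "0 < r \<Longrightarrow> measure lebesgue (kcyl r z0 :: 'd::finite kpoint set) =
    unit_ball_vol CARD('d) ^ 2 * r ^ (4 * CARD('d) + 2)"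
proof -
  assume r: "0 < r"
  have "measure lebesgue (kcyl r z0) = measure lborel (kcyl r z0)"
    by (rule measure_completion[OF kcyl_sets])
  also have "\<dots> = enn2real (emeasure lborel (kcyl r z0))"
    by (rule measure_def)
  also have "\<dots> = unit_ball_vol CARD('d) ^ 2 * r ^ (4 * CARD('d) + 2)"
    using r by (simp add: emeasure_kcyl)
  finally show ?thesis .
qed

lemma measure_kcyl_pos:
  assumes "0 < r"
  shows "0 < measure lebesgue (kcyl r (z0::'d::finite kpoint))"
  unfolding measure_kcyl[OF assms] using assms by (intro mult_pos_pos zero_less_power) auto

lemma measure_kcyl_scale:
  "0 < r \<Longrightarrow> 0 < s \<Longrightarrow> measure lebesgue (kcyl r (z::'d::finite kpoint)) =
    (r / s) ^ (4 * CARD('d) + 2) * measure lebesgue (kcyl s (z'::'d kpoint))"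
  by (simp add: measure_kcyl power_divide)

section \<open>Averages over sets of positive measure\<close>

definition mean_osc :: "'a::euclidean_space set \<Rightarrow> ('a \<Rightarrow> real) \<Rightarrow> real" where
  "mean_osc A f = sqrt (avg A (\<lambda>z. (f z - avg A f)\<^sup>2))"

lemma avg_nonneg: "(\<And>z. z \<in> A \<Longrightarrow> 0 \<le> f z) \<Longrightarrow> 0 \<le> avg A f"
  unfolding avg_def set_lebesgue_integral_def
  by (intro divide_nonneg_nonneg integral_nonneg_AE) (auto split: split_indicator)

lemma avg_mult_left: "avg A (\<lambda>z. c * f z) = c * avg A f"
  by (simp add: avg_def)

context
  fixes A :: "'a::euclidean_space set"
  assumes A: "A \<in> sets lebesgue" and A_pos: "0 < measure lebesgue A"
begin

lemma emeasure_ne_top_if_measure_pos: "emeasure lebesgue A \<noteq> \<infinity>"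
  using A_pos measure_zero_top by fastforce

lemma set_integrable_const: "set_integrable lebesgue A (\<lambda>_. c::real)"
  using A emeasure_ne_top_if_measure_pos by (simp add: set_integrable_def less_top)

lemma avg_const: "avg A (\<lambda>_. c) = c"
  using A emeasure_ne_top_if_measure_pos A_pos by (simp add: avg_def set_integral_const)

lemma avg_add:
  "set_integrable lebesgue A f \<Longrightarrow> set_integrable lebesgue A g \<Longrightarrow> avg A (\<lambda>z. f z + g z) = avg A f + avg A g"
  by (simp add: avg_def add_divide_distrib)

lemma avg_diff_const: "set_integrable lebesgue A f \<Longrightarrow> avg A (\<lambda>z. f z - c) = avg A f - c"
  using avg_add[of f "\<lambda>_. - c"] set_integrable_const avg_const by simp

lemma avg_le_const:
  assumes "set_integrable lebesgue A f" and "\<And>z. z \<in> A \<Longrightarrow> f z \<le> b"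
  shows "avg A f \<le> b"
proof -
  have "(LINT z:A|lebesgue. f z) \<le> (LINT z:A|lebesgue. b)"
    using assms set_integrable_const by (intro set_integral_mono)
  then show ?thesis
    using A emeasure_ne_top_if_measure_pos A_pos by (simp add: avg_def set_integral_const divide_le_eq mult.commute)
qed

lemma set_integrable_of_square:
  fixes f :: "'a \<Rightarrow> real"
  assumes "set_borel_measurable lebesgue A f" and "set_integrable lebesgue A (\<lambda>z. (f z)\<^sup>2)"
  shows "set_integrable lebesgue A f"
proof (rule set_integrable_bound)
  show "set_integrable lebesgue A (\<lambda>z. 1 + (f z)\<^sup>2)"
    using set_integrable_const assms(2) by (rule set_integral_add(1))
  have "\<bar>y\<bar> \<le> 1 + y\<^sup>2" for y :: real
    using zero_le_power2[of "\<bar>y\<bar> - 1"] by (simp add: power2_eq_square algebra_simps)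
  then show "AE z in lebesgue. z \<in> A \<longrightarrow> norm (f z) \<le> norm (1 + (f z)\<^sup>2)"
    by simp
qed (fact assms(1))

lemma set_integrable_square_diff_const:
  fixes f :: "'a \<Rightarrow> real"
  assumes "set_integrable lebesgue A f" and "set_integrable lebesgue A (\<lambda>z. (f z)\<^sup>2)"
  shows "set_integrable lebesgue A (\<lambda>z. (f z - c)\<^sup>2)"
proof -
  have "(\<lambda>z. (f z - c)\<^sup>2) = (\<lambda>z. (f z)\<^sup>2 + ((- 2 * c) * f z + c\<^sup>2))"
    by (simp add: fun_eq_iff power2_eq_square algebra_simps)
  moreover have "set_integrable lebesgue A (\<lambda>z. (f z)\<^sup>2 + ((- 2 * c) * f z + c\<^sup>2))"
    using assms set_integrable_const by (intro set_integral_add set_integrable_mult_right) auto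
  ultimately show ?thesis
    by simp
qed

lemma avg_square_diff_const:
  assumes f: "set_integrable lebesgue A f" and f2: "set_integrable lebesgue A (\<lambda>z. (f z)\<^sup>2)"
  shows "avg A (\<lambda>z. (f z - c)\<^sup>2) = avg A (\<lambda>z. (f z - avg A f)\<^sup>2) + (avg A f - c)\<^sup>2"
proof -
  define m where "m = avg A f"
  have "(f z - c)\<^sup>2 = ((f z - m)\<^sup>2 + 2 * (m - c) * (f z - m)) + (m - c)\<^sup>2" for z
    by (simp add: power2_eq_square algebra_simps)
  moreover have "avg A (\<lambda>z. 2 * (m - c) * (f z - m)) = 0"
    using avg_mult_left[of A "2 * (m - c)"] avg_diff_const[OF f] m_def by simp
  ultimately show ?thesis
    using avg_add avg_const f set_integrable_square_diff_const[OF f f2] set_integrable_const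
    by (simp add: m_def)
qed

lemma avg_sub_const_square_le:
  assumes "set_integrable lebesgue A f" and "set_integrable lebesgue A (\<lambda>z. (f z)\<^sup>2)"
  shows "(avg A f - c)\<^sup>2 \<le> avg A (\<lambda>z. (f z - c)\<^sup>2)"
proof -
  have "0 \<le> avg A (\<lambda>z. (f z - avg A f)\<^sup>2)"
    by (rule avg_nonneg) simp
  then show ?thesis
    using avg_square_diff_const[OF assms, of c] by linarith
qed

lemma mean_osc_le:
  assumes f: "set_integrable lebesgue A f" and f2: "set_integrable lebesgue A (\<lambda>z. (f z)\<^sup>2)"
    and osc: "\<And>y z. y \<in> A \<Longrightarrow> z \<in> A \<Longrightarrow> \<bar>f y - f z\<bar> \<le> b"
  shows "mean_osc A f \<le> b"
proof -
  obtain y where y: "y \<in> A"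
    using A_pos by fastforce
  have "avg A (\<lambda>z. (f z - avg A f)\<^sup>2) \<le> avg A (\<lambda>z. (f z - f y)\<^sup>2)"
    using avg_square_diff_const[OF f f2, of "f y"] by simp
  also have "\<dots> \<le> b\<^sup>2"
    using set_integrable_square_diff_const[OF f f2] osc[OF _ y] osc[OF y y]
    by (intro avg_le_const) (auto simp: abs_le_square_iff[symmetric] power2_abs)
  finally show ?thesis
    unfolding mean_osc_def using osc[OF y y] by (simp add: real_sqrt_le_iff' sqrt_le_iff_le_power2)
qed

end

lemma avg_subset_le:
  assumes "A \<subseteq> B" "A \<in> sets lebesgue" "0 < measure lebesgue A" "0 < measure lebesgue B"
    and "set_integrable lebesgue B g" and "\<And>z. z \<in> B \<Longrightarrow> 0 \<le> g z"
  shows "avg A g \<le> measure lebesgue B / measure lebesgue A * avg B g"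
proof -
  have "set_integrable lebesgue A g"
    using assms(5,2,1) by (rule set_integrable_subset)
  then have "(LINT z:A|lebesgue. g z) \<le> (LINT z:B|lebesgue. g z)"
    using assms unfolding set_lebesgue_integral_def set_integrable_def
    by (intro integral_mono) (auto split: split_indicator)
  then show ?thesis
    using assms(3,4) by (simp add: avg_def divide_right_mono)
qed

section \<open>The Campanato and Hoelder seminorms\<close>

lemma L2loc_kcyl:
  assumes "L2loc T u" and "z0 \<in> closure (kdom T)" and "0 < r"
  shows "set_integrable lebesgue (kcyl r z0) u"
    and "set_integrable lebesgue (kcyl r z0) (\<lambda>z. (u z)\<^sup>2)"
proof -
  have sub: "kcyl r z0 \<subseteq> kdom T"
    using assms(2) by (rule kcyl_subset_kdom)
  then have "kcyl r z0 \<inter> kdom T = kcyl r z0"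
    by blast
  then show u2: "set_integrable lebesgue (kcyl r z0) (\<lambda>z. (u z)\<^sup>2)"
    using assms(1) bounded_kcyl unfolding L2loc_def by metis
  have "set_borel_measurable lebesgue (kcyl r z0) u"
    using assms(1) set_borel_measurable_subset[OF _ kcyl_sets_lebesgue sub] unfolding L2loc_def by blast
  then show "set_integrable lebesgue (kcyl r z0) u"
    by (rule set_integrable_of_square[OF kcyl_sets_lebesgue measure_kcyl_pos[OF assms(3)] _ u2])
qed

lemma kholder_le_iff:
  fixes u :: "'d::finite kpoint \<Rightarrow> real"
  assumes "0 \<le> H"
  shows "kholder \<alpha> T u \<le> ennreal H \<longleftrightarrow>
    (\<forall>z\<in>kdom T. \<forall>z'\<in>kdom T. \<bar>u z - u z'\<bar> \<le> H * krho z z' powr \<alpha>)"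
proof -
  have quotient_le_iff: "ennreal (\<bar>u z - u z'\<bar> / krho z z' powr \<alpha>) \<le> ennreal H \<longleftrightarrow> \<bar>u z - u z'\<bar> \<le> H * krho z z' powr \<alpha>"
    if "z \<noteq> z'" for z z' :: "'d kpoint"
    using assms krho_pos[OF that] by (simp add: divide_le_eq)
  show ?thesis
  proof (intro iffI ballI)
    fix z z' :: "'d kpoint"
    assume le: "kholder \<alpha> T u \<le> ennreal H" and z: "z \<in> kdom T" "z' \<in> kdom T"
    show "\<bar>u z - u z'\<bar> \<le> H * krho z z' powr \<alpha>"
    proof (cases "z = z'")
      case False
      have "ennreal (\<bar>u z - u z'\<bar> / krho z z' powr \<alpha>) \<le> kholder \<alpha> T u"
        unfolding kholder_def by (rule SUP_upper2[where i="(z, z')"]) (use z False in simp_all)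
      then show ?thesis
        using le quotient_le_iff[OF False] by (meson order_trans)
    qed simp
  next
    assume holder: "\<forall>z\<in>kdom T. \<forall>z'\<in>kdom T. \<bar>u z - u z'\<bar> \<le> H * krho z z' powr \<alpha>"
    show "kholder \<alpha> T u \<le> ennreal H"
      unfolding kholder_def
    proof (rule SUP_least)
      fix p :: "'d kpoint \<times> 'd kpoint"
      assume p: "p \<in> {(z, z'). z \<in> kdom T \<and> z' \<in> kdom T \<and> z \<noteq> z'}"
      obtain z z' where p_eq: "p = (z, z')"
        by (rule prod.exhaust)
      show "ennreal (\<bar>u (fst p) - u (snd p)\<bar> / krho (fst p) (snd p) powr \<alpha>) \<le> ennreal H"
        using p holder quotient_le_iff unfolding p_eq by simp
    qed
  qed
qed

lemma kcampanato_le_iff: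
  fixes u :: "'d::finite kpoint \<Rightarrow> real"
  assumes "0 \<le> K"
  shows "kcampanato \<alpha> T u \<le> ennreal K \<longleftrightarrow>
    (\<forall>r>0. \<forall>z0\<in>closure (kdom T). mean_osc (kcyl r z0) u \<le> K * r powr \<alpha>)"
proof -
  have "ennreal (r powr - \<alpha> * mean_osc (kcyl r z0) u) \<le> ennreal K \<longleftrightarrow> mean_osc (kcyl r z0) u \<le> K * r powr \<alpha>"
    if "0 < r" for r z0
    using assms that by (simp add: powr_minus inverse_eq_divide divide_le_eq mult.commute)
  then show ?thesis
    unfolding kcampanato_def SUP_le_iff mean_osc_def[symmetric] by auto
qed

lemma kcampanato_le_kholder:
  assumes "L2loc T u" and "0 \<le> \<alpha>"
  shows "kcampanato \<alpha> T u \<le> ennreal (3 powr \<alpha>) * kholder \<alpha> T u"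
proof (cases "kholder \<alpha> T u")
  case (real h)
  have holder: "\<bar>u y - u z\<bar> \<le> h * krho y z powr \<alpha>" if "y \<in> kdom T" "z \<in> kdom T" for y z
    using kholder_le_iff[of h \<alpha> T u] real that by simp
  have "mean_osc (kcyl r z0) u \<le> 3 powr \<alpha> * h * r powr \<alpha>" if r: "0 < r" and z0: "z0 \<in> closure (kdom T)" for r z0
  proof (rule mean_osc_le[OF kcyl_sets_lebesgue measure_kcyl_pos[OF r] L2loc_kcyl[OF assms(1) z0 r]])
    fix y z assume yz: "y \<in> kcyl r z0" "z \<in> kcyl r z0"
    have "krho y z \<le> krho y z0 + krho z0 z"
      by (rule krho_triangle)
    also have "\<dots> \<le> 3 * r"
      using yz krho_commute_le[of z0 z] r by (simp add: kcyl_eq)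
    finally have "krho y z powr \<alpha> \<le> (3 * r) powr \<alpha>"
      using assms(2) krho_nonneg by (intro powr_mono2)
    then have "h * krho y z powr \<alpha> \<le> h * (3 * r) powr \<alpha>"
      using real(1) by (rule mult_left_mono)
    moreover have "\<bar>u y - u z\<bar> \<le> h * krho y z powr \<alpha>"
      using holder yz kcyl_subset_kdom[OF z0] by blast
    ultimately show "\<bar>u y - u z\<bar> \<le> 3 powr \<alpha> * h * r powr \<alpha>"
      using r by (simp add: powr_mult mult_ac)
  qed
  then have "kcampanato \<alpha> T u \<le> ennreal (3 powr \<alpha> * h)"
    using real kcampanato_le_iff[of "3 powr \<alpha> * h" \<alpha> T u] by simp
  then show ?thesis
    using real by (simp add: ennreal_mult)
qed (simp add: ennreal_mult_top)

section \<open>Functions with small integrals over all small cylinders vanish\<close>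

definition kshift :: "real \<Rightarrow> 'd::finite kpoint \<Rightarrow> 'd kpoint" where
  "kshift h z = (fst z + h, fst (snd z) - h *\<^sub>R snd (snd z), snd (snd z))"

lemma fst_kshift [simp]: "fst (kshift h z) = fst z + h"
  by (simp add: kshift_def)

lemma krho_kshift: "0 \<le> h \<Longrightarrow> krho z (kshift h z) = sqrt h"
  by (cases z) (simp add: kshift_def krho_def algebra_simps)

lemma krho_time_less: "krho z z0 < r \<Longrightarrow> \<bar>fst z - fst z0\<bar> < r\<^sup>2"
proof -
  assume r: "krho z z0 < r"
  obtain t x v t0 x0 v0 where "z = (t, x, v)" "z0 = (t0, x0, v0)"
    by (metis prod.exhaust)
  then have "\<bar>fst z - fst z0\<bar> \<le> (krho z z0)\<^sup>2"
    using krho_components_le[of t x v t0 x0 v0 "krho z z0"] by simp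
  also have "\<dots> < r\<^sup>2"
    by (rule power_strict_mono) (use r krho_nonneg[of z z0] in auto)
  finally show ?thesis .
qed

lemma kcyl_kshift_center:
  assumes r: "0 < r" and z0: "z0 \<in> kcyl (r / 8) (kshift (r\<^sup>2 / 2) z)"
  shows "z \<in> kcyl r z0"
proof -
  let ?c = "kshift (r\<^sup>2 / 2) z"
  have c: "fst z0 < fst ?c" "krho z0 ?c < r / 8"
    using z0 r by (simp_all add: kcyl_eq)
  have "fst ?c - fst z0 < (r / 8)\<^sup>2"
    using krho_time_less[OF c(2)] by simp
  then have t: "fst z < fst z0"
    using mult_pos_pos[OF r r] by (simp add: power2_eq_square)
  have "krho z z0 \<le> krho z ?c + krho ?c z0"
    by (rule krho_triangle)
  also have "\<dots> < 3 * r / 4 + 2 * (r / 8)"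
  proof (rule add_le_less_mono)
    have "(3 * r / 4)\<^sup>2 = 9 / 16 * r\<^sup>2"
      by (simp add: power2_eq_square)
    then have "sqrt (r\<^sup>2 / 2) \<le> sqrt ((3 * r / 4)\<^sup>2)"
      using zero_le_power2[of r] by (subst real_sqrt_le_iff) linarith
    also have "\<dots> = 3 * r / 4"
      using r by simp
    finally show "krho z ?c \<le> 3 * r / 4"
      by (simp add: krho_kshift)
    show "krho ?c z0 < 2 * (r / 8)"
      using krho_commute_le[of ?c z0] c(2) by linarith
  qed
  finally show ?thesis
    using t r by (simp add: kcyl_eq)
qed

lemma kcyl_kshift_subset:
  assumes R: "0 < R" and r: "0 < r" "r \<le> s" and z: "z \<in> kcyl R c"
    and z0: "z0 \<in> kcyl (r / 8) (kshift (r\<^sup>2 / 2) z)"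
  shows "z0 \<in> kcyl (R + 3 * s) (kshift (s\<^sup>2) c)"
proof -
  have zc: "fst z < fst c" "krho z c < R"
    using z R by (simp_all add: kcyl_eq)
  have "fst z0 < fst z + r\<^sup>2 / 2"
    using z0 r by (simp add: kcyl_eq)
  moreover have "r\<^sup>2 \<le> s\<^sup>2"
    using r by (simp add: power_mono)
  ultimately have "fst z0 < fst c + s\<^sup>2"
    using zc(1) zero_le_power2[of r] by linarith
  then have t: "fst z0 < fst (kshift (s\<^sup>2) c)"
    by simp
  have "krho z0 (kshift (s\<^sup>2) c) \<le> krho z0 z + (krho z c + krho c (kshift (s\<^sup>2) c))"
    using krho_triangle[of z0 _ z] krho_triangle[of z _ c] by (meson add_left_mono order_trans)
  also have "\<dots> < 2 * r + (R + s)"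
  proof (intro add_less_le_mono add_less_le_mono)
    show "krho z0 z < 2 * r"
      using krho_commute_le[of z0 z] kcyl_kshift_center[OF r(1) z0] r(1) by (simp add: kcyl_eq)
  qed (use zc r in \<open>simp_all add: krho_kshift\<close>)
  finally show ?thesis
    using t r R by (simp add: kcyl_eq)
qed

lemma kcyl_pair_sets:
  assumes "0 < r"
  shows "{p :: 'd::finite kpoint \<times> 'd kpoint. snd p \<in> kcyl r (fst p)} \<in> sets (lborel \<Otimes>\<^sub>M lborel)"
proof -
  have "{p :: 'd kpoint \<times> 'd kpoint. snd p \<in> kcyl r (fst p)} =
      {p. fst (snd p) < fst (fst p) \<and> krho (snd p) (fst p) < r}"
    using assms by (simp add: kcyl_eq)
  moreover have "open {p :: 'd kpoint \<times> 'd kpoint. fst (snd p) < fst (fst p) \<and> krho (snd p) (fst p) < r}"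
    by (simp add: open_Collect_conj open_Collect_less continuous_intros)
  ultimately show ?thesis
    unfolding lborel_prod by simp
qed

text \<open>Fubini over the centres: each \<open>z \<in> Q\<^sub>R(c)\<close> lies in \<open>Q\<^sub>r(z\<^sub>0)\<close> for all \<open>z\<^sub>0\<close> in a
  cylinder of radius \<open>r/8\<close>, and all these centres lie in one enlarged cylinder.\<close>
lemma nn_integral_kcyl_le_iterated:
  fixes G :: "'d::finite kpoint \<Rightarrow> ennreal"
  assumes G [measurable]: "G \<in> borel_measurable lborel" and R: "0 < R" and r: "0 < r" "r \<le> s"
  shows "(\<integral>\<^sup>+z\<in>kcyl R c. G z \<partial>lborel) * emeasure lborel (kcyl (r / 8) c) \<le>
    (\<integral>\<^sup>+z0\<in>kcyl (R + 3 * s) (kshift (s\<^sup>2) c). (\<integral>\<^sup>+z\<in>kcyl r z0. G z \<partial>lborel) \<partial>lborel)"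
proof -
  define B where "B = kcyl (R + 3 * s) (kshift (s\<^sup>2) c)"
  define f where "f z0 z = G z * indicator (kcyl r z0) z * indicator B z0" for z0 z
  note kcyl_pair_sets[OF r(1), measurable]
  have "case_prod f = (\<lambda>p. G (snd p) * indicator {p. snd p \<in> kcyl r (fst p)} p * indicator B (fst p))"
    by (auto simp: f_def fun_eq_iff split: split_indicator)
  then have f_meas: "case_prod f \<in> borel_measurable (lborel \<Otimes>\<^sub>M lborel)"
    unfolding B_def by simp
  let ?\<mu> = "emeasure lborel (kcyl (r / 8) c)"
  have "(\<integral>\<^sup>+z\<in>kcyl R c. G z \<partial>lborel) * ?\<mu> = (\<integral>\<^sup>+z. G z * indicator (kcyl R c) z * ?\<mu> \<partial>lborel)"
    by (rule nn_integral_multc[symmetric]) simp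
  also have "\<dots> \<le> (\<integral>\<^sup>+z. (\<integral>\<^sup>+z0. f z0 z \<partial>lborel) \<partial>lborel)"
  proof (rule nn_integral_mono)
    fix z
    show "G z * indicator (kcyl R c) z * ?\<mu> \<le> (\<integral>\<^sup>+z0. f z0 z \<partial>lborel)"
    proof (cases "z \<in> kcyl R c")
      case True
      have "?\<mu> = emeasure lborel (kcyl (r / 8) (kshift (r\<^sup>2 / 2) z))"
        using r by (simp add: emeasure_kcyl)
      then have "G z * indicator (kcyl R c) z * ?\<mu> =
          (\<integral>\<^sup>+z0. G z * indicator (kcyl (r / 8) (kshift (r\<^sup>2 / 2) z)) z0 \<partial>lborel)"
        using True by (simp add: nn_integral_cmult_indicator[OF kcyl_sets])
      also have "\<dots> \<le> (\<integral>\<^sup>+z0. f z0 z \<partial>lborel)"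
        using kcyl_kshift_center[OF r(1), of _ z] kcyl_kshift_subset[OF R r True]
        by (intro nn_integral_mono) (simp add: f_def B_def split: split_indicator)
      finally show ?thesis .
    qed simp
  qed
  also have "\<dots> = (\<integral>\<^sup>+z0. (\<integral>\<^sup>+z. f z0 z \<partial>lborel) \<partial>lborel)"
    by (rule lborel_pair.Fubini'[OF f_meas])
  also have "\<dots> = (\<integral>\<^sup>+z0\<in>B. (\<integral>\<^sup>+z\<in>kcyl r z0. G z \<partial>lborel) \<partial>lborel)"
    unfolding f_def by (intro nn_integral_cong nn_integral_multc) simp
  finally show ?thesis
    unfolding B_def .
qed

lemma nn_integral_kcyl_le_powr:
  fixes G :: "'d::finite kpoint \<Rightarrow> ennreal"
  assumes G: "G \<in> borel_measurable lborel" and C: "0 \<le> C"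
    and small: "\<And>z0 r. z0 \<in> kdom T \<Longrightarrow> 0 < r \<Longrightarrow>
      (\<integral>\<^sup>+z\<in>kcyl r z0. G z \<partial>lborel) \<le> ennreal (C * r powr \<epsilon> * measure lebesgue (kcyl r z0))"
    and R: "0 < R" and r: "0 < r" "r \<le> s" and margin: "kshift (s\<^sup>2) c \<in> kdom T"
  shows "(\<integral>\<^sup>+z\<in>kcyl R c. G z \<partial>lborel) \<le>
    ennreal (C * 8 ^ (4 * CARD('d) + 2) * measure lebesgue (kcyl (R + 3 * s) (kshift (s\<^sup>2) c)) * r powr \<epsilon>)"
proof -
  define B where "B = kcyl (R + 3 * s) (kshift (s\<^sup>2) c)"
  define m where "m = measure lebesgue (kcyl (r / 8) c)"
  let ?D = "4 * CARD('d) + 2"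
  have B_sub: "B \<subseteq> kdom T"
    unfolding B_def using margin closure_subset by (intro kcyl_subset_kdom) blast
  have m: "0 < m"
    unfolding m_def using r(1) by (simp add: measure_kcyl_pos)
  have Q: "measure lebesgue (kcyl r z0) = 8 ^ ?D * m" for z0 :: "'d kpoint"
    unfolding m_def using measure_kcyl_scale[of r "r / 8" z0 c] r(1) by simp
  have "emeasure lborel (kcyl (r / 8) c) = ennreal m"
    unfolding m_def using r(1) by (simp add: emeasure_kcyl measure_kcyl)
  then have "(\<integral>\<^sup>+z\<in>kcyl R c. G z \<partial>lborel) * ennreal m \<le>
      (\<integral>\<^sup>+z0\<in>B. (\<integral>\<^sup>+z\<in>kcyl r z0. G z \<partial>lborel) \<partial>lborel)"
    using nn_integral_kcyl_le_iterated[OF G R r, of c] unfolding B_def by simp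
  also have "\<dots> \<le> (\<integral>\<^sup>+z0. ennreal (C * r powr \<epsilon> * (8 ^ ?D * m)) * indicator B z0 \<partial>lborel)"
  proof (rule nn_integral_mono)
    fix z0
    show "(\<integral>\<^sup>+z\<in>kcyl r z0. G z \<partial>lborel) * indicator B z0 \<le>
        ennreal (C * r powr \<epsilon> * (8 ^ ?D * m)) * indicator B z0"
      using small[of z0 r] B_sub r(1) Q[of z0] by (cases "z0 \<in> B") auto
  qed
  also have "\<dots> = ennreal (C * r powr \<epsilon> * (8 ^ ?D * m)) * emeasure lborel B"
    by (rule nn_integral_cmult_indicator) (simp add: B_def open_kcyl)
  also have "\<dots> = ennreal (C * 8 ^ ?D * measure lebesgue B * r powr \<epsilon>) * ennreal m"
    using R r C m unfolding B_def by (simp add: emeasure_kcyl measure_kcyl ennreal_mult'[symmetric] mult_ac)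
  finally show ?thesis
    using m unfolding B_def by (simp add: ennreal_mult_le_mult_iff mult.commute[of _ "ennreal m"])
qed

lemma kdom_kshift_margin:
  assumes "c \<in> kdom T"
  obtains s where "0 < s" "kshift (s\<^sup>2) c \<in> kdom T"
proof -
  obtain y where y: "ereal (fst c) < ereal y" "ereal y < T"
    using assms ereal_dense2 unfolding kdom_def by blast
  show ?thesis
  proof
    show "0 < sqrt (y - fst c)"
      using y(1) by simp
    show "kshift ((sqrt (y - fst c))\<^sup>2) c \<in> kdom T"
      using y by (simp add: kdom_def)
  qed
qed

lemma kdom_kcyl_cover:
  assumes "z \<in> kdom T"
  obtains q :: real and n :: nat where "q \<in> \<rat>" "ereal q < T" "z \<in> kcyl (real n + 1) (q, 0, 0)"
proof -
  obtain t x v where z: "z = (t, x, v)"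
    using prod_cases3 by blast
  obtain y where y: "ereal t < ereal y" "ereal y < T"
    using assms ereal_dense2 unfolding z kdom_def by fastforce
  obtain q where q: "q \<in> \<rat>" "t < q" "q < y"
    using Rats_dense_in_real[of t y] y(1) by auto
  obtain n :: nat where n: "max (q - t) (max (norm x) (norm v)) < real n"
    using reals_Archimedean2 by blast
  define R where "R = real n + 1"
  have R: "1 \<le> R" "R \<le> R\<^sup>2" "R\<^sup>2 \<le> R ^ 3"
    unfolding R_def by (simp_all add: power2_eq_square power3_eq_cube)
  have "q - t < R" "norm x < R" "norm v < R"
    using n unfolding R_def by simp_all
  then have "\<bar>t - q\<bar> < R\<^sup>2" "norm (x - 0 + (t - q) *\<^sub>R 0) < R ^ 3" "norm (v - 0) < R"
    using q(2) R by (simp_all add: abs_if)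
  then have "krho z (q, 0, 0) < R"
    unfolding z using R(1) krho_less_iff[of R t x v q 0 0] by simp
  then have "z \<in> kcyl R (q, 0, 0)"
    using q(2) R(1) by (simp add: kcyl_eq z)
  moreover have "ereal q < T"
    using q(3) y(2) ereal_less_eq(3)[of q y] by (meson less_imp_le order.strict_trans1)
  ultimately show ?thesis
    using that q(1) unfolding R_def by blast
qed

lemma nn_integral_kcyl_eq_0:
  fixes G :: "'d::finite kpoint \<Rightarrow> ennreal"
  assumes G: "G \<in> borel_measurable lborel" and \<epsilon>: "0 < \<epsilon>" and C: "0 \<le> C"
    and small: "\<And>z0 r. z0 \<in> kdom T \<Longrightarrow> 0 < r \<Longrightarrow>
      (\<integral>\<^sup>+z\<in>kcyl r z0. G z \<partial>lborel) \<le> ennreal (C * r powr \<epsilon> * measure lebesgue (kcyl r z0))"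
    and c: "c \<in> kdom T" and R: "0 < R"
  shows "(\<integral>\<^sup>+z\<in>kcyl R c. G z \<partial>lborel) = 0"
proof -
  obtain s where s: "0 < s" "kshift (s\<^sup>2) c \<in> kdom T"
    using c by (rule kdom_kshift_margin)
  define K where "K = C * 8 ^ (4 * CARD('d) + 2) * measure lebesgue (kcyl (R + 3 * s) (kshift (s\<^sup>2) c))"
  have "((\<lambda>r. ennreal (K * r powr \<epsilon>)) \<longlongrightarrow> ennreal (K * 0)) (at_right 0)"
    using \<epsilon> by (intro tendsto_ennrealI tendsto_mult_left tendsto_zero_powrI tendsto_ident_at
        eventually_at_rightI[of 0 1]) auto
  moreover have "\<forall>\<^sub>F r in at_right 0. (\<integral>\<^sup>+z\<in>kcyl R c. G z \<partial>lborel) \<le> ennreal (K * r powr \<epsilon>)"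
    unfolding K_def using s nn_integral_kcyl_le_powr[OF G C small R _ _ s(2)]
    by (intro eventually_at_rightI[of 0 s]) auto
  ultimately have "(\<integral>\<^sup>+z\<in>kcyl R c. G z \<partial>lborel) \<le> ennreal (K * 0)"
    by (rule tendsto_lowerbound) simp
  then show ?thesis
    by simp
qed

lemma AE_kdom_if_AE_kcyl:
  assumes "\<And>c R. c \<in> kdom T \<Longrightarrow> 0 < R \<Longrightarrow> AE z in M. z \<in> kcyl R c \<longrightarrow> P z"
  shows "AE z in M. z \<in> kdom T \<longrightarrow> P (z::'d::finite kpoint)"
proof -
  define I where "I = {(q, n :: nat). q \<in> \<rat> \<and> ereal q < T}"
  have "countable I"
    by (rule countable_subset[of _ "\<rat> \<times> UNIV"]) (auto simp: I_def countable_rat)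
  then have "AE z in M. \<forall>(q, n)\<in>I. z \<in> kcyl (real n + 1) (q, 0, 0) \<longrightarrow> P z"
    using assms unfolding I_def by (subst AE_ball_countable) (auto simp: kdom_def)
  then show ?thesis
  proof eventually_elim
    case (elim z)
    show ?case
    proof
      assume "z \<in> kdom T"
      then obtain q n where "q \<in> \<rat>" "ereal q < T" and z: "z \<in> kcyl (real n + 1) (q, 0, 0)"
        by (rule kdom_kcyl_cover)
      then have "(q, n) \<in> I"
        unfolding I_def by simp
      then show "P z"
        using bspec[OF elim \<open>(q, n) \<in> I\<close>] z by simp
    qed
  qed
qed

lemma AE_kdom_eq_0_if_kcyl_nn_integral_small:
  fixes G :: "'d::finite kpoint \<Rightarrow> ennreal"
  assumes G: "G \<in> borel_measurable lebesgue" and \<epsilon>: "0 < \<epsilon>" and C: "0 \<le> C"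
    and small: "\<And>z0 r. z0 \<in> kdom T \<Longrightarrow> 0 < r \<Longrightarrow>
      (\<integral>\<^sup>+z\<in>kcyl r z0. G z \<partial>lebesgue) \<le> ennreal (C * r powr \<epsilon> * measure lebesgue (kcyl r z0))"
  shows "AE z in lebesgue. z \<in> kdom T \<longrightarrow> G z = 0"
proof -
  obtain G' where G' [measurable]: "G' \<in> borel_measurable lborel" and GG': "AE z in lborel. G z = G' z"
    using completion_ex_borel_measurable[OF G] by blast
  have "(\<integral>\<^sup>+z\<in>A. G z \<partial>lebesgue) = (\<integral>\<^sup>+z\<in>A. G' z \<partial>lborel)" for A
  proof -
    have "(\<integral>\<^sup>+z\<in>A. G z \<partial>lebesgue) = (\<integral>\<^sup>+z\<in>A. G' z \<partial>lebesgue)"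
      using AE_completion[OF GG'] by (intro nn_integral_cong_AE) auto
    then show ?thesis
      by (simp add: nn_integral_completion)
  qed
  then have small': "(\<integral>\<^sup>+z\<in>kcyl r z0. G' z \<partial>lborel) \<le> ennreal (C * r powr \<epsilon> * measure lebesgue (kcyl r z0))"
    if "z0 \<in> kdom T" "0 < r" for z0 r
    using small[OF that] by simp
  have "AE z in lborel. z \<in> kcyl R c \<longrightarrow> G' z = 0" if "c \<in> kdom T" "0 < R" for c R
  proof -
    have "(\<integral>\<^sup>+z. G' z * indicator (kcyl R c) z \<partial>lborel) = 0"
      using nn_integral_kcyl_eq_0[OF G' \<epsilon> C small' that] by simp
    then show ?thesis
      by (subst (asm) nn_integral_0_iff_AE) (auto simp: kcyl_sets split: split_indicator)
  qed
  then have "AE z in lborel. z \<in> kdom T \<longrightarrow> G' z = 0"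
    by (rule AE_kdom_if_AE_kcyl)
  then have "AE z in lborel. z \<in> kdom T \<longrightarrow> G z = 0"
    using GG' by eventually_elim simp
  then show ?thesis
    by (rule AE_completion)
qed

section \<open>From the Campanato to the Hoelder seminorm\<close>

definition dyadic_sum :: "real \<Rightarrow> real" where
  "dyadic_sum \<alpha> = 1 / (1 - 2 powr - \<alpha>)"

lemma
  assumes "0 < \<alpha>"
  shows dyadic_sum_ge_1: "1 \<le> dyadic_sum \<alpha>"
    and dyadic_sum_eq: "1 + 2 powr - \<alpha> * dyadic_sum \<alpha> = dyadic_sum \<alpha>"
proof -
  have "1 \<le> 1 / (1 - q) \<and> 1 + q * (1 / (1 - q)) = 1 / (1 - q)" if "0 < q" "q < 1" for q :: real
    using that by (simp add: field_simps)
  from this[of "2 powr - \<alpha>"] show "1 \<le> dyadic_sum \<alpha>" "1 + 2 powr - \<alpha> * dyadic_sum \<alpha> = dyadic_sum \<alpha>"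
    unfolding dyadic_sum_def using assms powr_less_one[of 2 "- \<alpha>"] by simp_all
qed

locale kinetic_campanato =
  fixes \<alpha> :: real and T :: ereal and u :: "'d::finite kpoint \<Rightarrow> real" and k :: real
  assumes \<alpha>_pos: "0 < \<alpha>" and \<alpha>_le_1: "\<alpha> \<le> 1"
    and L2loc: "L2loc T u" and k_nonneg: "0 \<le> k"
    and mean_osc_kcyl_le: "\<And>r z0. 0 < r \<Longrightarrow> z0 \<in> closure (kdom T) \<Longrightarrow> mean_osc (kcyl r z0) u \<le> k * r powr \<alpha>"
begin

definition uavg :: "real \<Rightarrow> 'd kpoint \<Rightarrow> real" where
  "uavg r z = avg (kcyl r z) u"

definition w :: "'d kpoint \<Rightarrow> real" where
  "w z = lim (\<lambda>j. uavg ((1 / 2) ^ j) z)"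

lemma dyadic_bound_nonneg: "0 \<le> 2 ^ (2 * CARD('d) + 1) * dyadic_sum \<alpha> * k"
  using dyadic_sum_ge_1[OF \<alpha>_pos] k_nonneg by simp

lemma powr_double_le: "0 \<le> D \<Longrightarrow> (2 * D) powr \<alpha> \<le> 2 * D powr \<alpha>"
  using \<alpha>_le_1 powr_mono[of \<alpha> 1 2] by (simp add: powr_mult mult_right_mono)

lemma kcyl_variance_le:
  assumes "0 < r" and "z0 \<in> closure (kdom T)"
  shows "avg (kcyl r z0) (\<lambda>z. (u z - uavg r z0)\<^sup>2) \<le> (k * r powr \<alpha>)\<^sup>2"
  using mean_osc_kcyl_le[OF assms] unfolding mean_osc_def uavg_def by (rule sqrt_le_D)

lemma uavg_diff_le:
  assumes b: "b \<in> closure (kdom T)" and \<rho>: "0 < \<rho>" and r: "r \<le> 2 * \<rho>"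
    and sub: "kcyl \<rho> a \<subseteq> kcyl r b"
  shows "\<bar>uavg \<rho> a - uavg r b\<bar> \<le> 2 ^ (2 * CARD('d) + 1) * k * r powr \<alpha>"
proof -
  define A B m where "A = kcyl \<rho> a" and "B = kcyl r b" and "m = uavg r b"
  have A_pos: "0 < measure lebesgue A"
    unfolding A_def using \<rho> by (rule measure_kcyl_pos)
  have r0: "0 < r"
  proof (rule ccontr)
    assume "\<not> 0 < r"
    then show False
      using sub kcyl_empty[of r b] A_pos unfolding A_def by simp
  qed
  have iB: "set_integrable lebesgue B u" "set_integrable lebesgue B (\<lambda>z. (u z)\<^sup>2)"
    unfolding B_def using L2loc b r0 by (rule L2loc_kcyl)+
  have "A \<subseteq> B" "A \<in> sets lebesgue"
    unfolding A_def B_def using sub kcyl_sets_lebesgue by simp_all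
  then have iA: "set_integrable lebesgue A u" "set_integrable lebesgue A (\<lambda>z. (u z)\<^sup>2)"
    using set_integrable_subset iB by metis+
  have "(uavg \<rho> a - m)\<^sup>2 \<le> avg A (\<lambda>z. (u z - m)\<^sup>2)"
    unfolding uavg_def A_def[symmetric] using \<open>A \<in> sets lebesgue\<close> A_pos iA
    by (rule avg_sub_const_square_le)
  also have "\<dots> \<le> measure lebesgue B / measure lebesgue A * avg B (\<lambda>z. (u z - m)\<^sup>2)"
    using \<open>A \<subseteq> B\<close> \<open>A \<in> sets lebesgue\<close> A_pos measure_kcyl_pos[OF r0]
      set_integrable_square_diff_const[OF kcyl_sets_lebesgue measure_kcyl_pos[OF r0] iB[unfolded B_def]]
    unfolding B_def by (rule avg_subset_le) simp
  also have "measure lebesgue B / measure lebesgue A = (r / \<rho>) ^ (4 * CARD('d) + 2)"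
    using A_pos unfolding B_def measure_kcyl_scale[OF r0 \<rho>, of b a] A_def[symmetric]
    by (intro nonzero_mult_div_cancel_right) simp
  also have "(r / \<rho>) ^ (4 * CARD('d) + 2) * avg B (\<lambda>z. (u z - m)\<^sup>2) \<le>
      2 ^ (4 * CARD('d) + 2) * (k * r powr \<alpha>)\<^sup>2"
  proof (rule mult_mono)
    show "(r / \<rho>) ^ (4 * CARD('d) + 2) \<le> 2 ^ (4 * CARD('d) + 2)"
      using \<rho> r r0 by (intro power_mono) (auto simp: divide_le_eq)
    show "avg B (\<lambda>z. (u z - m)\<^sup>2) \<le> (k * r powr \<alpha>)\<^sup>2"
      unfolding B_def m_def using r0 b by (rule kcyl_variance_le)
  qed (auto intro: avg_nonneg)
  also have "\<dots> = (2 ^ (2 * CARD('d) + 1) * k * r powr \<alpha>)\<^sup>2"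
    by (simp add: power_mult_distrib flip: power_mult)
  finally show ?thesis
    using abs_le_square_iff[of "uavg \<rho> a - m" "2 ^ (2 * CARD('d) + 1) * k * r powr \<alpha>"] k_nonneg
    unfolding m_def by simp
qed

lemma uavg_dyadic_diff_le:
  assumes z: "z \<in> closure (kdom T)" and \<rho>: "0 < \<rho>"
  shows "\<rho> \<le> r \<Longrightarrow> r \<le> 2 ^ n * \<rho> \<Longrightarrow>
    \<bar>uavg \<rho> z - uavg r z\<bar> \<le> 2 ^ (2 * CARD('d) + 1) * dyadic_sum \<alpha> * k * r powr \<alpha>"
proof (induction n arbitrary: r)
  case 0
  then show ?case
    using mult_nonneg_nonneg[OF dyadic_bound_nonneg powr_ge_zero] by simp
next
  case (Suc n)
  let ?c = "2 ^ (2 * CARD('d) + 1) :: real"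
  have r: "0 < r"
    using Suc.prems \<rho> by linarith
  show ?case
  proof (cases "r \<le> 2 * \<rho>")
    case True
    have "\<bar>uavg \<rho> z - uavg r z\<bar> \<le> ?c * k * r powr \<alpha>"
      using z \<rho> True kcyl_mono[OF Suc.prems(1)] by (rule uavg_diff_le)
    also have "\<dots> \<le> ?c * dyadic_sum \<alpha> * k * r powr \<alpha>"
      using mult_left_mono[OF dyadic_sum_ge_1[OF \<alpha>_pos], of "?c * k * r powr \<alpha>"] k_nonneg
      by (simp add: mult_ac)
    finally show ?thesis .
  next
    case False
    have IH: "\<bar>uavg \<rho> z - uavg (r / 2) z\<bar> \<le> ?c * dyadic_sum \<alpha> * k * (r / 2) powr \<alpha>"
      using False Suc.prems(2) by (intro Suc.IH) auto
    have step: "\<bar>uavg (r / 2) z - uavg r z\<bar> \<le> ?c * k * r powr \<alpha>"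
      using uavg_diff_le[OF z _ _ kcyl_mono[of "r / 2" r z]] r by simp
    have "(r / 2) powr \<alpha> = 2 powr - \<alpha> * r powr \<alpha>"
      using r by (simp add: powr_divide powr_minus_divide)
    then have "\<bar>uavg \<rho> z - uavg r z\<bar> \<le> 2 powr - \<alpha> * dyadic_sum \<alpha> * (?c * k * r powr \<alpha>) + ?c * k * r powr \<alpha>"
      using IH step by (simp add: mult_ac)
    also have "\<dots> = (1 + 2 powr - \<alpha> * dyadic_sum \<alpha>) * (?c * k * r powr \<alpha>)"
      by (simp add: distrib_right)
    finally show ?thesis
      unfolding dyadic_sum_eq[OF \<alpha>_pos] by (simp add: mult_ac)
  qed
qed

lemma uavg_scale_diff_le:
  assumes "z \<in> closure (kdom T)" and "0 < \<rho>" and "\<rho> \<le> r"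
  shows "\<bar>uavg \<rho> z - uavg r z\<bar> \<le> 2 ^ (2 * CARD('d) + 1) * dyadic_sum \<alpha> * k * r powr \<alpha>"
proof -
  obtain n where "r / \<rho> < 2 ^ n"
    using real_arch_pow[of 2 "r / \<rho>"] by auto
  then have "r \<le> 2 ^ n * \<rho>"
    using assms(2) by (simp add: divide_less_eq)
  then show ?thesis
    by (rule uavg_dyadic_diff_le[OF assms])
qed

lemma uavg_tendsto_w:
  assumes z: "z \<in> closure (kdom T)"
  shows "(\<lambda>j. uavg ((1 / 2) ^ j) z) \<longlonglongrightarrow> w z"
proof -
  define \<beta> where "\<beta> j = 2 ^ (2 * CARD('d) + 1) * dyadic_sum \<alpha> * k * ((1 / 2) ^ j) powr \<alpha>" for j :: nat
  have "(\<lambda>j. ((1 / 2 :: real) ^ j) powr \<alpha>) \<longlonglongrightarrow> 0"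
    using \<alpha>_pos by (intro tendsto_zero_powrI LIMSEQ_power_zero) auto
  then have "\<beta> \<longlonglongrightarrow> 0"
    unfolding \<beta>_def using tendsto_mult_left[of _ 0 sequentially "2 ^ (2 * CARD('d) + 1) * dyadic_sum \<alpha> * k"] by simp
  have "Cauchy (\<lambda>j. uavg ((1 / 2) ^ j) z)"
  proof (rule CauchyI)
    fix e :: real assume "0 < e"
    then obtain M where M: "\<beta> M < e / 2"
      using \<open>\<beta> \<longlonglongrightarrow> 0\<close> by (metis half_gt_zero order_tendstoD(2) eventually_sequentially order_refl)
    have near: "\<bar>uavg ((1 / 2) ^ i) z - uavg ((1 / 2) ^ M) z\<bar> \<le> \<beta> M" if "M \<le> i" for i
      unfolding \<beta>_def using z that by (intro uavg_scale_diff_le) (auto intro: power_decreasing)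
    show "\<exists>M. \<forall>i\<ge>M. \<forall>j\<ge>M. norm (uavg ((1 / 2) ^ i) z - uavg ((1 / 2) ^ j) z) < e"
    proof (intro exI allI impI)
      fix i j assume "M \<le> i" "M \<le> j"
      then show "norm (uavg ((1 / 2) ^ i) z - uavg ((1 / 2) ^ j) z) < e"
        using near[of i] near[of j] M unfolding real_norm_def by arith
    qed
  qed
  then show ?thesis
    unfolding w_def Cauchy_convergent_iff convergent_LIMSEQ_iff .
qed

lemma uavg_w_diff_le:
  assumes z: "z \<in> closure (kdom T)" and r: "0 < r"
  shows "\<bar>uavg r z - w z\<bar> \<le> 2 ^ (2 * CARD('d) + 1) * dyadic_sum \<alpha> * k * r powr \<alpha>"
proof -
  obtain N where N: "(1 / 2 :: real) ^ N < r"
    using real_arch_pow_inv[OF r, of "1 / 2"] by auto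
  have "(\<lambda>j. \<bar>uavg ((1 / 2) ^ j) z - uavg r z\<bar>) \<longlonglongrightarrow> \<bar>w z - uavg r z\<bar>"
    by (intro tendsto_intros uavg_tendsto_w[OF z])
  moreover have "\<bar>uavg ((1 / 2) ^ j) z - uavg r z\<bar> \<le> 2 ^ (2 * CARD('d) + 1) * dyadic_sum \<alpha> * k * r powr \<alpha>"
    if "N \<le> j" for j
  proof (rule uavg_scale_diff_le[OF z])
    have "(1 / 2 :: real) ^ j \<le> (1 / 2) ^ N"
      using that by (rule power_decreasing) simp_all
    then show "(1 / 2 :: real) ^ j \<le> r"
      using N by linarith
  qed simp
  ultimately have "\<bar>w z - uavg r z\<bar> \<le> 2 ^ (2 * CARD('d) + 1) * dyadic_sum \<alpha> * k * r powr \<alpha>"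
    by (intro LIMSEQ_le_const2) auto
  then show ?thesis
    by (simp add: abs_minus_commute)
qed

lemma w_diff_le_ordered:
  assumes a: "a \<in> closure (kdom T)" and b: "b \<in> closure (kdom T)" and ab: "fst a \<le> fst b"
    and D: "0 < D" "krho a b \<le> D"
  shows "\<bar>w a - w b\<bar> \<le> 2 ^ (2 * CARD('d) + 1) * (3 * dyadic_sum \<alpha> + 2) * k * D powr \<alpha>"
proof -
  let ?c = "2 ^ (2 * CARD('d) + 1) :: real" and ?s = "dyadic_sum \<alpha>"
  have "kcyl D a \<subseteq> kcyl (2 * D) b"
    using kcyl_subset_kcyl_add[OF ab D(1)] kcyl_mono[of "D + krho a b" "2 * D" b] D(2) by simp
  then have "\<bar>uavg D a - uavg (2 * D) b\<bar> \<le> ?c * k * (2 * D) powr \<alpha>"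
    using b D(1) by (intro uavg_diff_le) auto
  moreover have "\<bar>uavg D a - w a\<bar> \<le> ?c * ?s * k * D powr \<alpha>"
    using a D(1) by (rule uavg_w_diff_le)
  moreover have "\<bar>uavg (2 * D) b - w b\<bar> \<le> ?c * ?s * k * (2 * D) powr \<alpha>"
    using b D(1) by (intro uavg_w_diff_le) auto
  moreover have "?c * k * (2 * D) powr \<alpha> \<le> ?c * k * (2 * D powr \<alpha>)"
    by (rule mult_left_mono[OF powr_double_le]) (use D(1) k_nonneg in simp_all)
  moreover have "?c * ?s * k * (2 * D) powr \<alpha> \<le> ?c * ?s * k * (2 * D powr \<alpha>)"
    by (rule mult_left_mono[OF powr_double_le]) (use D(1) dyadic_bound_nonneg in simp_all)
  ultimately have "\<bar>w a - w b\<bar> \<le> ?c * ?s * k * D powr \<alpha> + ?c * k * (2 * D powr \<alpha>) + ?c * ?s * k * (2 * D powr \<alpha>)"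
    by linarith
  also have "\<dots> = ?c * (3 * ?s + 2) * k * D powr \<alpha>"
    by (simp add: algebra_simps)
  finally show ?thesis .
qed

lemma w_holder:
  assumes z: "z \<in> closure (kdom T)" and z': "z' \<in> closure (kdom T)"
  shows "\<bar>w z - w z'\<bar> \<le> 2 ^ (2 * CARD('d) + 1) * (6 * dyadic_sum \<alpha> + 4) * k * krho z z' powr \<alpha>"
proof (cases "z = z'")
  case False
  let ?C = "2 ^ (2 * CARD('d) + 1) * (3 * dyadic_sum \<alpha> + 2) * k"
  define R where "R = krho z z'"
  have R: "0 < R"
    unfolding R_def using False by (rule krho_pos)
  have "\<bar>w z - w z'\<bar> \<le> ?C * (2 * R) powr \<alpha>"
  proof (cases "fst z \<le> fst z'")
    case True
    then show ?thesis
      using w_diff_le_ordered[OF z z' True, of "2 * R"] R unfolding R_def by simp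
  next
    case False
    then have "\<bar>w z' - w z\<bar> \<le> ?C * (2 * R) powr \<alpha>"
      using w_diff_le_ordered[OF z' z, of "2 * R"] krho_commute_le[of z' z] R unfolding R_def by simp
    then show ?thesis
      by (simp add: abs_minus_commute)
  qed
  also have "\<dots> \<le> ?C * (2 * R powr \<alpha>)"
    by (rule mult_left_mono[OF powr_double_le]) (use R dyadic_sum_ge_1[OF \<alpha>_pos] k_nonneg in simp_all)
  finally show ?thesis
    unfolding R_def by (simp add: algebra_simps)
qed simp

lemma continuous_on_w: "continuous_on (kdom T) w"
proof (rule continuous_on_krho_holder[OF \<alpha>_pos])
  fix z z' :: "'d kpoint"
  assume "z \<in> kdom T" "z' \<in> kdom T"
  then show "\<bar>w z - w z'\<bar> \<le> 2 ^ (2 * CARD('d) + 1) * (6 * dyadic_sum \<alpha> + 4) * k * krho z z' powr \<alpha>"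
    using w_holder closure_subset by blast
qed

lemma uavg_w_diff_le_on_kcyl:
  assumes z0: "z0 \<in> closure (kdom T)" and r: "0 < r" and z: "z \<in> kcyl r z0"
  shows "\<bar>uavg r z0 - w z\<bar> \<le> 2 ^ (2 * CARD('d) + 1) * (7 * dyadic_sum \<alpha> + 4) * k * r powr \<alpha>"
proof -
  have z': "z \<in> closure (kdom T)"
    using z kcyl_subset_kdom[OF z0] closure_subset by blast
  have "krho z z0 powr \<alpha> \<le> r powr \<alpha>"
    using z r \<alpha>_pos krho_nonneg[of z z0] by (intro powr_mono2) (auto simp: kcyl_eq)
  then have "2 ^ (2 * CARD('d) + 1) * (6 * dyadic_sum \<alpha> + 4) * k * krho z z0 powr \<alpha> \<le>
      2 ^ (2 * CARD('d) + 1) * (6 * dyadic_sum \<alpha> + 4) * k * r powr \<alpha>"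
    using dyadic_sum_ge_1[OF \<alpha>_pos] k_nonneg by (intro mult_left_mono) simp_all
  then have "\<bar>w z - w z0\<bar> \<le> 2 ^ (2 * CARD('d) + 1) * (6 * dyadic_sum \<alpha> + 4) * k * r powr \<alpha>"
    using w_holder[OF z' z0] by linarith
  moreover have "\<bar>uavg r z0 - w z0\<bar> \<le> 2 ^ (2 * CARD('d) + 1) * dyadic_sum \<alpha> * k * r powr \<alpha>"
    using z0 r by (rule uavg_w_diff_le)
  ultimately have "\<bar>uavg r z0 - w z\<bar> \<le> 2 ^ (2 * CARD('d) + 1) * dyadic_sum \<alpha> * k * r powr \<alpha> +
      2 ^ (2 * CARD('d) + 1) * (6 * dyadic_sum \<alpha> + 4) * k * r powr \<alpha>"
    by linarith
  also have "\<dots> = 2 ^ (2 * CARD('d) + 1) * (7 * dyadic_sum \<alpha> + 4) * k * r powr \<alpha>"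
    by (simp add: algebra_simps)
  finally show ?thesis .
qed

lemma nn_integral_kcyl_square_diff_w_le:
  assumes z0: "z0 \<in> kdom T" and r: "0 < r"
  shows "(\<integral>\<^sup>+z\<in>kcyl r z0. ennreal ((u z - w z)\<^sup>2) \<partial>lebesgue) \<le>
    ennreal ((2 + 2 * (2 ^ (2 * CARD('d) + 1) * (7 * dyadic_sum \<alpha> + 4))\<^sup>2) * (k * r powr \<alpha>)\<^sup>2
      * measure lebesgue (kcyl r z0))"
proof -
  define Q m c where "Q = kcyl r z0" and "m = uavg r z0"
    and "c = 2 ^ (2 * CARD('d) + 1) * (7 * dyadic_sum \<alpha> + 4) * k * r powr \<alpha>"
  define g where "g z = 2 * (u z - m)\<^sup>2 + 2 * c\<^sup>2" for z
  have z0': "z0 \<in> closure (kdom T)"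
    using z0 closure_subset by blast
  have Q: "Q \<in> sets lebesgue" "0 < measure lebesgue Q"
    unfolding Q_def using r by (simp_all add: kcyl_sets_lebesgue measure_kcyl_pos)
  have iu: "set_integrable lebesgue Q u" "set_integrable lebesgue Q (\<lambda>z. (u z)\<^sup>2)"
    unfolding Q_def using L2loc z0' r by (rule L2loc_kcyl)+
  have i2: "set_integrable lebesgue Q (\<lambda>z. (u z - m)\<^sup>2)"
    using Q iu by (rule set_integrable_square_diff_const)
  have ig: "set_integrable lebesgue Q g"
    unfolding g_def using i2 set_integrable_const[OF Q] by (intro set_integral_add set_integrable_mult_right)
  have pointwise: "(u z - w z)\<^sup>2 \<le> g z" if z: "z \<in> Q" for z
  proof -
    have "\<bar>m - w z\<bar> \<le> c"
      unfolding m_def c_def using z0' r z unfolding Q_def by (rule uavg_w_diff_le_on_kcyl)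
    then have "(m - w z)\<^sup>2 \<le> c\<^sup>2"
      by (simp add: abs_le_square_iff[symmetric])
    moreover have "(u z - w z)\<^sup>2 \<le> 2 * (u z - m)\<^sup>2 + 2 * (m - w z)\<^sup>2"
      using zero_le_power2[of "(u z - m) - (m - w z)"] by (simp add: power2_eq_square algebra_simps)
    ultimately show ?thesis
      unfolding g_def by linarith
  qed
  have "(\<integral>\<^sup>+z\<in>Q. ennreal ((u z - w z)\<^sup>2) \<partial>lebesgue) \<le> (\<integral>\<^sup>+z. ennreal (indicator Q z * g z) \<partial>lebesgue)"
    using pointwise by (intro nn_integral_mono) (auto intro: ennreal_leI split: split_indicator)
  also have "\<dots> = ennreal (LINT z:Q|lebesgue. g z)"
    using ig unfolding set_integrable_def set_lebesgue_integral_def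
    by (subst nn_integral_eq_integral) (auto simp: g_def split: split_indicator)
  also have "(LINT z:Q|lebesgue. g z) = measure lebesgue Q * avg Q g"
    using Q(2) by (simp add: avg_def)
  also have "\<dots> = measure lebesgue Q * (2 * avg Q (\<lambda>z. (u z - m)\<^sup>2) + 2 * c\<^sup>2)"
    unfolding g_def using i2 set_integrable_const[OF Q]
    by (simp add: avg_add[OF Q] avg_mult_left avg_const[OF Q])
  also have "\<dots> \<le> measure lebesgue Q * (2 * (k * r powr \<alpha>)\<^sup>2 + 2 * c\<^sup>2)"
    using kcyl_variance_le[OF r z0'] unfolding Q_def m_def by (intro mult_left_mono) auto
  also have "\<dots> = (2 + 2 * (2 ^ (2 * CARD('d) + 1) * (7 * dyadic_sum \<alpha> + 4))\<^sup>2) * (k * r powr \<alpha>)\<^sup>2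
      * measure lebesgue Q"
    unfolding c_def by (simp only: power_mult_distrib) (simp add: algebra_simps)
  finally show ?thesis
    unfolding Q_def by (simp add: ennreal_leI)
qed

lemma w_ae_eq: "AE z in lebesgue. z \<in> kdom T \<longrightarrow> w z = u z"
proof -
  define K where "K = (2 + 2 * (2 ^ (2 * CARD('d) + 1) * (7 * dyadic_sum \<alpha> + 4))\<^sup>2) * k\<^sup>2"
  define G where "G z = ennreal ((indicator (kdom T) z * u z - indicator (kdom T) z * w z)\<^sup>2)" for z
  have "(\<lambda>z. indicator (kdom T) z * u z) \<in> borel_measurable lebesgue"
    using L2loc unfolding L2loc_def set_borel_measurable_def by simp
  moreover have "(\<lambda>z. indicator (kdom T) z * w z) \<in> borel_measurable lborel"
    using borel_measurable_continuous_on_indicator[OF borel_open[OF open_kdom] continuous_on_w] by simp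
  then have "(\<lambda>z. indicator (kdom T) z * w z) \<in> borel_measurable lebesgue"
    by (rule measurable_completion)
  ultimately have G: "G \<in> borel_measurable lebesgue"
    unfolding G_def by measurable
  have small: "(\<integral>\<^sup>+z\<in>kcyl r z0. G z \<partial>lebesgue) \<le> ennreal (K * r powr (2 * \<alpha>) * measure lebesgue (kcyl r z0))"
    if z0: "z0 \<in> kdom T" and r: "0 < r" for z0 r
  proof -
    have "kcyl r z0 \<subseteq> kdom T"
      using z0 closure_subset by (intro kcyl_subset_kdom) blast
    then have "(\<integral>\<^sup>+z\<in>kcyl r z0. G z \<partial>lebesgue) = (\<integral>\<^sup>+z\<in>kcyl r z0. ennreal ((u z - w z)\<^sup>2) \<partial>lebesgue)"
      by (intro nn_integral_cong) (auto simp: G_def split: split_indicator)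
    also have "\<dots> \<le> ennreal ((2 + 2 * (2 ^ (2 * CARD('d) + 1) * (7 * dyadic_sum \<alpha> + 4))\<^sup>2) * (k * r powr \<alpha>)\<^sup>2
        * measure lebesgue (kcyl r z0))"
      using z0 r by (rule nn_integral_kcyl_square_diff_w_le)
    also have "(k * r powr \<alpha>)\<^sup>2 = k\<^sup>2 * r powr (2 * \<alpha>)"
      using r powr_power[of r \<alpha> 2] by (simp add: power_mult_distrib)
    finally show ?thesis
      by (simp add: K_def mult_ac)
  qed
  then have "AE z in lebesgue. z \<in> kdom T \<longrightarrow> G z = 0"
    using \<alpha>_pos by (intro AE_kdom_eq_0_if_kcyl_nn_integral_small[OF G _ _ small]) (simp_all add: K_def)
  then show ?thesis
    by eventually_elim (simp add: G_def)
qed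

lemma kholder_w_le: "kholder \<alpha> T w \<le> ennreal (2 ^ (2 * CARD('d) + 1) * (6 * dyadic_sum \<alpha> + 4) * k)"
proof -
  have "\<forall>z\<in>kdom T. \<forall>z'\<in>kdom T.
      \<bar>w z - w z'\<bar> \<le> 2 ^ (2 * CARD('d) + 1) * (6 * dyadic_sum \<alpha> + 4) * k * krho z z' powr \<alpha>"
    using w_holder closure_subset by blast
  then show ?thesis
    using dyadic_sum_ge_1[OF \<alpha>_pos] k_nonneg by (subst kholder_le_iff) simp_all
qed

end

lemma AE_eq_kholder_le_kcampanato:
  fixes u :: "'d::finite kpoint \<Rightarrow> real"
  assumes "0 < \<alpha>" and "\<alpha> \<le> 1" and "L2loc T u" and "kcampanato \<alpha> T u < \<infinity>"
  obtains w where "AE z in lebesgue. z \<in> kdom T \<longrightarrow> w z = u z"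
    and "kholder \<alpha> T w \<le> ennreal (2 ^ (2 * CARD('d) + 1) * (6 * dyadic_sum \<alpha> + 4)) * kcampanato \<alpha> T u"
proof -
  from assms(4) obtain k where k: "0 \<le> k" "kcampanato \<alpha> T u = ennreal k"
    by (cases "kcampanato \<alpha> T u") auto
  interpret kinetic_campanato \<alpha> T u k
    using assms k kcampanato_le_iff[of k \<alpha> T u] by unfold_locales auto
  show ?thesis
  proof
    show "AE z in lebesgue. z \<in> kdom T \<longrightarrow> w z = u z"
      by (rule w_ae_eq)
    show "kholder \<alpha> T w \<le> ennreal (2 ^ (2 * CARD('d) + 1) * (6 * dyadic_sum \<alpha> + 4)) * kcampanato \<alpha> T u"
      using kholder_w_le k dyadic_sum_ge_1[OF assms(1)] by (simp add: ennreal_mult)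
  qed
qed

theorem lemma2p1:
  fixes \<alpha> :: real
  assumes "0 < \<alpha>" and "\<alpha> \<le> 1"
  shows "\<exists>N>0. \<forall>(T::ereal) (u :: 'd::finite kpoint \<Rightarrow> real).
           T \<noteq> -\<infinity> \<longrightarrow> L2loc T u \<longrightarrow> kcampanato \<alpha> T u < \<infinity> \<longrightarrow>
             (\<exists>w. (AE z in lebesgue. z \<in> kdom T \<longrightarrow> w z = u z) \<and>
                  ennreal N * kholder \<alpha> T w \<le> kcampanato \<alpha> T u) \<and>
             kcampanato \<alpha> T u \<le> ennreal (1 / N) * kholder \<alpha> T u"
proof -
  define H where "H = 2 ^ (2 * CARD('d) + 1) * (6 * dyadic_sum \<alpha> + 4)"
  define N where "N = 1 / (H + 3 powr \<alpha>)"
  have H: "0 \<le> H"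
    unfolding H_def using dyadic_sum_ge_1[OF assms(1)] by simp
  then have N: "0 < N" "N * H \<le> 1" "1 / N = H + 3 powr \<alpha>"
    unfolding N_def by (simp_all add: add_nonneg_pos field_simps)
  show ?thesis
  proof (intro exI[of _ N] conjI allI impI N(1))
    fix T :: ereal and u :: "'d kpoint \<Rightarrow> real"
    assume "L2loc T u" and "kcampanato \<alpha> T u < \<infinity>"
    with assms obtain w where ae: "AE z in lebesgue. z \<in> kdom T \<longrightarrow> w z = u z"
      and "kholder \<alpha> T w \<le> ennreal H * kcampanato \<alpha> T u"
      unfolding H_def by (rule AE_eq_kholder_le_kcampanato)
    then have "ennreal N * kholder \<alpha> T w \<le> ennreal (N * H) * kcampanato \<alpha> T u"
      using N(1) H by (simp add: ennreal_mult mult_left_mono mult.assoc)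
    also have "\<dots> \<le> kcampanato \<alpha> T u"
      using mult_right_mono[OF ennreal_leI[OF N(2)], of "kcampanato \<alpha> T u"] by simp
    finally show "\<exists>w. (AE z in lebesgue. z \<in> kdom T \<longrightarrow> w z = u z) \<and> ennreal N * kholder \<alpha> T w \<le> kcampanato \<alpha> T u"
      using ae by blast
  next
    fix T :: ereal and u :: "'d kpoint \<Rightarrow> real"
    assume "L2loc T u"
    then have "kcampanato \<alpha> T u \<le> ennreal (3 powr \<alpha>) * kholder \<alpha> T u"
      using assms(1) by (intro kcampanato_le_kholder) simp_all
    also have "\<dots> \<le> ennreal (1 / N) * kholder \<alpha> T u"
      unfolding N(3) using H by (intro mult_right_mono ennreal_leI) simp_all
    finally show "kcampanato \<alpha> T u \<le> ennreal (1 / N) * kholder \<alpha> T u" .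
  qed
qed

end
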